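(* Let $\psi_{pl}:\mathbb{R}_{\geq 0}\to\mathbb{R}$ be a non-decreasing concave piecewise linear function with 2 or more (linear) pieces. Then $\psi_{pl}$ is not a neighbor function.
   Context: A neighbor function is a function $\psi:\mathbb{R}_{\geq 0}\to\mathbb{R}$ that is (i) strictly increasing, (ii) continuous, (iii) concave, and (iv) such that $g(x)=\psi(e^{x})$ is convex as a function of $x\in\mathbb{R}$. *)

theory Defs
  imports "HOL-Analysis.Analysis"
begin

text \<open>Neighbor function: psi defined on the nonnegative reals (we use a total function
  real => real and only constrain it on {0..}).\<close>
definition neighbor_function :: "(real \<Rightarrow> real) \<Rightarrow> bool" where
  "neighbor_function \<psi> \<longleftrightarrow>
     strict_mono_on {0..} \<psi> \<and>
     continuous_on {0..} \<psi> \<and>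
     concave_on {0..} \<psi> \<and>
     convex_on UNIV (\<lambda>x. \<psi> (exp x))"

text \<open>psi is piecewise linear on [0,oo) with exactly n linear pieces:
  breakpoints 0 = t 0 < t 1 < ... < t (n-1), psi x = a i * x + b i on
  [t i, t (i+1)] (the last piece on [t (n-1), oo)), and consecutive
  pieces have different slopes (so they are genuinely distinct pieces).\<close>
definition piecewise_linear_pieces :: "(real \<Rightarrow> real) \<Rightarrow> nat \<Rightarrow> bool" where
  "piecewise_linear_pieces \<psi> n \<longleftrightarrow>
     (\<exists>t a b :: nat \<Rightarrow> real.
        t 0 = 0 \<and>
        (\<forall>i. Suc i < n \<longrightarrow> t i < t (Suc i)) \<and>
        (\<forall>i<n. \<forall>x. t i \<le> x \<and> (Suc i < n \<longrightarrow> x \<le> t (Suc i)) \<longrightarrow> \<psi> x = a i * x + b i) \<and>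
        (\<forall>i. Suc i < n \<longrightarrow> a i \<noteq> a (Suc i)))"

end

theory Submission
  imports Defs
begin

text \<open>At the first breakpoint \<open>s > 0\<close> the slope of \<open>\<psi>\<close> jumps from \<open>a\<close> to \<open>a' \<noteq> a\<close>.
  For a convex function the left derivative never exceeds the right one. Applied to the
  convex function \<open>-\<psi>\<close> at \<open>s\<close> this gives \<open>a' \<le> a\<close>; applied to \<open>x \<mapsto> \<psi> (exp x)\<close> at \<open>ln s\<close>,
  whose one-sided derivatives there are \<open>a * s\<close> and \<open>a' * s\<close>, it gives \<open>a \<le> a'\<close>.\<close>

lemma convex_on_left_derivative_le_right_derivative:
  fixes f :: "real \<Rightarrow> real"
  assumes convex: "convex_on I f" and y: "y \<in> interior I"
    and left: "(f has_real_derivative l) (at_left y)"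
    and right: "(f has_real_derivative r) (at_right y)"
  shows "l \<le> r"
proof -
  obtain e where "e > 0" and ball: "ball y e \<subseteq> I"
    using y by (meson mem_interior)
  define slope where "slope x = (f x - f y) / (x - y)" for x
  have slope_mono: "slope x \<le> slope z" if "y - e < x" "x < y" "y < z" "z < y + e" for x z
  proof -
    have "x \<in> I" "z \<in> I" using ball that by (auto simp: dist_real_def)
    with convex_on_slope_le[OF convex this, of y] that
    have "slope x \<le> (f y - f z) / (y - z)"
      unfolding slope_def by (meson order_trans)
    also have "\<dots> = slope z"
      unfolding slope_def by (metis minus_diff_eq minus_divide_divide)
    finally show ?thesis .
  qed
  have l_le_slope: "l \<le> slope z" if "y < z" "z < y + e" for z
  proof (rule tendsto_upperbound)
    show "(slope \<longlongrightarrow> l) (at_left y)"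
      using left by (simp add: has_field_derivative_iff slope_def[abs_def])
    have "\<forall>\<^sub>F x in at_left y. x \<in> {y - e<..<y}"
      using \<open>e > 0\<close> by (intro eventually_at_left_real) simp
    then show "\<forall>\<^sub>F x in at_left y. slope x \<le> slope z"
      by eventually_elim (use that slope_mono in auto)
  qed simp
  show "l \<le> r"
  proof (rule tendsto_lowerbound)
    show "(slope \<longlongrightarrow> r) (at_right y)"
      using right by (simp add: has_field_derivative_iff slope_def[abs_def])
    have "\<forall>\<^sub>F z in at_right y. z \<in> {y<..<y + e}"
      using \<open>e > 0\<close> by (intro eventually_at_right_real) simp
    then show "\<forall>\<^sub>F z in at_right y. l \<le> slope z"
      by eventually_elim (use l_le_slope in auto)
  qed simp
qed

lemma has_real_derivative_at_left_transform:
  assumes "(g has_real_derivative D) (at y)" and "0 < \<delta>"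
    and "\<And>x. y - \<delta> < x \<Longrightarrow> x \<le> y \<Longrightarrow> f x = g x"
  shows "(f has_real_derivative D) (at_left y)"
  unfolding at_within_Iic_at_left[symmetric]
proof (rule has_field_derivative_transform_within)
  show "(g has_real_derivative D) (at y within {..y})"
    using assms(1) by (rule has_field_derivative_at_within)
qed (use assms(2,3) in \<open>auto simp: dist_real_def\<close>)

lemma has_real_derivative_at_right_transform:
  assumes "(g has_real_derivative D) (at y)" and "0 < \<delta>"
    and "\<And>x. y \<le> x \<Longrightarrow> x < y + \<delta> \<Longrightarrow> f x = g x"
  shows "(f has_real_derivative D) (at_right y)"
  unfolding at_within_Ici_at_right[symmetric]
proof (rule has_field_derivative_transform_within)
  show "(g has_real_derivative D) (at y within {y..})"
    using assms(1) by (rule has_field_derivative_at_within)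
qed (use assms(2,3) in \<open>auto simp: dist_real_def\<close>)

lemma piecewise_linear_pieces_first_breakpoint:
  assumes "piecewise_linear_pieces \<psi> n" and "n \<ge> 2"
  obtains s s' a a' b b' where "0 < s" "s < s'" "a \<noteq> a'"
    "\<And>x. 0 \<le> x \<Longrightarrow> x \<le> s \<Longrightarrow> \<psi> x = a * x + b"
    "\<And>x. s \<le> x \<Longrightarrow> x \<le> s' \<Longrightarrow> \<psi> x = a' * x + b'"
proof -
  obtain t a b :: "nat \<Rightarrow> real" where "t 0 = 0"
    and t_less: "\<And>i. Suc i < n \<Longrightarrow> t i < t (Suc i)"
    and piece: "\<And>i x. i < n \<Longrightarrow> t i \<le> x \<Longrightarrow> (Suc i < n \<Longrightarrow> x \<le> t (Suc i)) \<Longrightarrow>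
      \<psi> x = a i * x + b i"
    and slopes_differ: "\<And>i. Suc i < n \<Longrightarrow> a i \<noteq> a (Suc i)"
    using assms(1) unfolding piecewise_linear_pieces_def by metis
  define s' where "s' = (if n > 2 then t 2 else t 1 + 1)"
  show thesis
  proof (rule that[of "t 1" s' "a 0" "a 1" "b 0" "b 1"])
    show "0 < t 1" "t 1 < s'" "a 0 \<noteq> a 1"
      using t_less[of 0] t_less[of 1] \<open>t 0 = 0\<close> slopes_differ[of 0] assms(2)
      by (auto simp: s'_def numeral_2_eq_2)
    show "\<psi> x = a 0 * x + b 0" if "0 \<le> x" "x \<le> t 1" for x
      using piece[of 0 x] that assms(2) \<open>t 0 = 0\<close> by simp
    show "\<psi> x = a 1 * x + b 1" if "t 1 \<le> x" "x \<le> s'" for x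
      using piece[of 1 x] that assms(2) by (auto simp: s'_def numeral_2_eq_2 split: if_splits)
  qed
qed

lemma concave_on_kink_slope_le:
  fixes \<psi> :: "real \<Rightarrow> real"
  assumes "concave_on {0..} \<psi>" and "0 < s" "s < s'"
    and left: "\<And>x. 0 \<le> x \<Longrightarrow> x \<le> s \<Longrightarrow> \<psi> x = a * x + b"
    and right: "\<And>x. s \<le> x \<Longrightarrow> x \<le> s' \<Longrightarrow> \<psi> x = a' * x + b'"
  shows "a' \<le> a"
proof -
  have "convex_on {0..} (\<lambda>x. - \<psi> x)"
    using assms(1) by (simp add: concave_on_def)
  moreover have "s \<in> interior {0..}"
    using interior_Ici[of "-1" "0::real"] \<open>0 < s\<close> by simp
  moreover have "((\<lambda>x. - \<psi> x) has_real_derivative - a) (at_left s)"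
    by (rule has_real_derivative_at_left_transform[where g = "\<lambda>x. - (a * x + b)" and \<delta> = s])
      (use \<open>0 < s\<close> left in \<open>auto intro!: derivative_eq_intros\<close>)
  moreover have "((\<lambda>x. - \<psi> x) has_real_derivative - a') (at_right s)"
    by (rule has_real_derivative_at_right_transform[where g = "\<lambda>x. - (a' * x + b')" and \<delta> = "s' - s"])
      (use \<open>s < s'\<close> right in \<open>auto intro!: derivative_eq_intros\<close>)
  ultimately have "- a \<le> - a'"
    by (rule convex_on_left_derivative_le_right_derivative)
  then show ?thesis by simp
qed

lemma convex_on_exp_kink_slope_le:
  fixes \<psi> :: "real \<Rightarrow> real"
  assumes "convex_on UNIV (\<lambda>x. \<psi> (exp x))" and "0 < s" "s < s'"
    and left: "\<And>x. 0 \<le> x \<Longrightarrow> x \<le> s \<Longrightarrow> \<psi> x = a * x + b"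
    and right: "\<And>x. s \<le> x \<Longrightarrow> x \<le> s' \<Longrightarrow> \<psi> x = a' * x + b'"
  shows "a \<le> a'"
proof -
  have "((\<lambda>x. \<psi> (exp x)) has_real_derivative a * s) (at_left (ln s))"
  proof (rule has_real_derivative_at_left_transform[where g = "\<lambda>x. a * exp x + b" and \<delta> = 1])
    show "((\<lambda>x. a * exp x + b) has_real_derivative a * s) (at (ln s))"
      using \<open>0 < s\<close> by (auto intro!: derivative_eq_intros)
    show "\<psi> (exp x) = a * exp x + b" if "x \<le> ln s" for x
      using left that \<open>0 < s\<close> by (simp add: ln_ge_iff)
  qed simp
  moreover have "((\<lambda>x. \<psi> (exp x)) has_real_derivative a' * s) (at_right (ln s))"
  proof (rule has_real_derivative_at_right_transform[where g = "\<lambda>x. a' * exp x + b'" and \<delta> = "ln s' - ln s"])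
    show "((\<lambda>x. a' * exp x + b') has_real_derivative a' * s) (at (ln s))"
      using \<open>0 < s\<close> by (auto intro!: derivative_eq_intros)
    show "\<psi> (exp x) = a' * exp x + b'" if "ln s \<le> x" "x < ln s + (ln s' - ln s)" for x
    proof (rule right)
      have "exp (ln s) \<le> exp x" "exp x < exp (ln s')"
        using that by simp_all
      then show "s \<le> exp x" "exp x \<le> s'"
        using \<open>0 < s\<close> \<open>s < s'\<close> by simp_all
    qed
  qed (use \<open>0 < s\<close> \<open>s < s'\<close> in simp)
  ultimately have "a * s \<le> a' * s"
    using assms(1) by (intro convex_on_left_derivative_le_right_derivative) auto
  then show ?thesis
    using \<open>0 < s\<close> by simp
qed

theorem theoremF1:
  fixes \<psi> :: "real \<Rightarrow> real" and n :: nat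
  assumes "mono_on {0..} \<psi>"
    and "concave_on {0..} \<psi>"
    and "piecewise_linear_pieces \<psi> n"
    and "n \<ge> 2"
  shows "\<not> neighbor_function \<psi>"
proof
  assume "neighbor_function \<psi>"
  then have convex_exp: "convex_on UNIV (\<lambda>x. \<psi> (exp x))"
    by (simp add: neighbor_function_def)
  obtain s s' a a' b b' where kink: "0 < s" "s < s'" and "a \<noteq> a'"
    and left: "\<And>x. 0 \<le> x \<Longrightarrow> x \<le> s \<Longrightarrow> \<psi> x = a * x + b"
    and right: "\<And>x. s \<le> x \<Longrightarrow> x \<le> s' \<Longrightarrow> \<psi> x = a' * x + b'"
    using piecewise_linear_pieces_first_breakpoint[OF assms(3,4)] by metis
  have "a' \<le> a"
    using concave_on_kink_slope_le[OF assms(2) kink left right] .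
  moreover have "a \<le> a'"
    using convex_on_exp_kink_slope_le[OF convex_exp kink left right] .
  ultimately show False using \<open>a \<noteq> a'\<close> by simp
qed

end
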